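(* Let $m\in(1,2]$ and $U\in C^3(\mathbb{R}^d)$ such that there exists $A_1\ge0$ with $\|D^kU(q)\|\le A_1(\|q\|+1)^{m-k}$ for all $q$ and $k=2,3$. Let $T\in\mathbb{N}^*$ and $\gamma\in(0,m-1)$. (a) If $m\in(1,2)$ and $h_0>0$, there exist $\kappa>0$ and $R\ge0$ such that for all $h\in(0,h_0]$, all $q_0,p_0\in\mathbb{R}^d$ with $\|p_0\|\le\|q_0\|^\gamma$ and $\|q_0\|\ge R$, and all $i,j,k\in\{1,\dots,T\}$, $$\|\Phi^{q,i}_h(q_0,p_0)-\Phi^{q,j}_h(q_0,p_0)\|\le\kappa h\|\Phi^{q,k}_h(q_0,p_0)\|^{m-1}.$$ (b) If $m=2$, there exist $h_0>0$, $\kappa>0$ and $R\ge0$ such that the same inequality holds for all $h\in(0,h_0]$, all $q_0,p_0$ with $\|p_0\|\le\|q_0\|^\gamma$ and $\|q_0\|\ge R$, and all $i,j,k\in\{1,\dots,T\}$.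
   Context: $D^kU$ is the $k$-th differential with operator norm. For $h>0$ the leapfrog map is $\Phi_h=\Psi^{(1)}_h\circ\Psi^{(2)}_h\circ\Psi^{(1)}_h$ with $\Psi^{(1)}_h(q,p)=(q,p-(h/2)\nabla U(q))$ and $\Psi^{(2)}_h(q,p)=(q+hp,p)$; $\Phi^{\circ \ell}_h$ is its $\ell$-fold composition and $\Phi^{q,\ell}_h$ the position (first $d$ coordinates) component of $\Phi^{\circ\ell}_h$. *)

theory Defs
  imports "HOL-Analysis.Analysis"
begin

text \<open>Leapfrog map Phi_h = Psi1_h o Psi2_h o Psi1_h, with Psi1_h(q,p) = (q, p - (h/2) grad U(q))
  and Psi2_h(q,p) = (q + h p, p). G is the gradient of U.\<close>

definition psi1 :: "('a::real_normed_vector \<Rightarrow> 'a) \<Rightarrow> real \<Rightarrow> 'a \<times> 'a \<Rightarrow> 'a \<times> 'a" where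
  "psi1 G h qp = (fst qp, snd qp - (h/2) *\<^sub>R G (fst qp))"

definition psi2 :: "real \<Rightarrow> 'a::real_normed_vector \<times> 'a \<Rightarrow> 'a \<times> 'a" where
  "psi2 h qp = (fst qp + h *\<^sub>R snd qp, snd qp)"

definition leapfrog :: "('a::real_normed_vector \<Rightarrow> 'a) \<Rightarrow> real \<Rightarrow> 'a \<times> 'a \<Rightarrow> 'a \<times> 'a" where
  "leapfrog G h = psi1 G h \<circ> psi2 h \<circ> psi1 G h"

definition leapfrog_q :: "('a::real_normed_vector \<Rightarrow> 'a) \<Rightarrow> real \<Rightarrow> nat \<Rightarrow> 'a \<Rightarrow> 'a \<Rightarrow> 'a" where
  "leapfrog_q G h l q p = fst ((leapfrog G h ^^ l) (q, p))"

end

theory Submission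
  imports Defs
begin

text \<open>
  Integrating the Hessian bound along rays shows that the gradient grows like \<open>\<parallel>q\<parallel>^(m-1)\<close>,
  so on the ball of radius \<open>2\<parallel>q\<^sub>0\<parallel>\<close> the force is \<open>O(\<parallel>q\<^sub>0\<parallel>^(m-1))\<close>, and so is
  the initial momentum because \<open>\<gamma> < m - 1\<close>. While the trajectory stays in that ball, \<open>T\<close>
  leapfrog steps move the position by at most \<open>h Q \<parallel>q\<^sub>0\<parallel>^(m-1)\<close> with \<open>Q\<close> independent
  of \<open>q\<^sub>0\<close>. This is at most \<open>\<parallel>q\<^sub>0\<parallel>/2\<close> when \<open>\<parallel>q\<^sub>0\<parallel>^(2-m) \<ge> 2 h\<^sub>0 Q\<close> (for
  \<open>m < 2\<close>, a condition on \<open>\<parallel>q\<^sub>0\<parallel>\<close>) or \<open>h \<le> 1/(2Q)\<close> (for \<open>m = 2\<close>, a condition on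
  the step size). Then the trajectory indeed stays in the ball, every position has norm at
  least \<open>\<parallel>q\<^sub>0\<parallel>/2\<close>, and any two positions differ by at most
  \<open>2 h Q \<parallel>q\<^sub>0\<parallel>^(m-1) \<le> 4 Q h \<parallel>\<Phi>^(q,k)\<parallel>^(m-1)\<close>.
\<close>

lemma norm_growth_of_bounded_derivative:
  fixes G :: "'a::real_normed_vector \<Rightarrow> 'b::real_normed_vector" and H :: "'a \<Rightarrow> 'a \<Rightarrow>\<^sub>L 'b"
  assumes deriv: "\<And>q. (G has_derivative blinfun_apply (H q)) (at q)"
    and m: "1 < m"
    and bound: "\<And>q. norm (H q) \<le> A * (norm q + 1) powr (m - 2)"
  shows "norm (G q - G 0) \<le> A / (m - 1) * ((norm q + 1) powr (m - 1) - 1)"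
proof -
  define \<phi> where "\<phi> t = A / (m - 1) * (t * norm q + 1) powr (m - 1)" for t
  have G_ray: "((\<lambda>t. G (t *\<^sub>R q)) has_vector_derivative H (t *\<^sub>R q) q) (at t)" for t
  proof -
    have "((\<lambda>t. t *\<^sub>R q) has_derivative (\<lambda>x. x *\<^sub>R q)) (at t)"
      by (auto intro!: derivative_eq_intros)
    from has_derivative_compose[OF this deriv] show ?thesis
      by (simp add: has_vector_derivative_def blinfun.scaleR_right)
  qed
  have \<phi>_deriv: "(\<phi> has_vector_derivative A * (t * norm q + 1) powr (m - 2) * norm q) (at t)"
    if "0 < t" for t
  proof -
    have "0 < t * norm q + 1" using that by (simp add: add_nonneg_pos)
    then have "((\<lambda>t. (t * norm q + 1) powr (m - 1)) has_real_derivative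
        (m - 1) * (t * norm q + 1) powr (m - 2) * norm q) (at t)"
      by (auto intro!: derivative_eq_intros)
    from DERIV_cmult[OF this, of "A / (m - 1)"] show ?thesis
      unfolding \<phi>_def has_real_derivative_iff_has_vector_derivative[symmetric]
      using m by (simp add: mult.assoc)
  qed
  have "norm ((\<lambda>t. G (t *\<^sub>R q)) 1 - (\<lambda>t. G (t *\<^sub>R q)) 0) \<le> \<phi> 1 - \<phi> 0"
  proof (rule differentiable_bound_general[OF zero_less_one])
    show "continuous_on {0..1} (\<lambda>t. G (t *\<^sub>R q))"
      using G_ray by (intro continuous_at_imp_continuous_on ballI has_vector_derivative_continuous)
  next
    show "continuous_on {0..1} \<phi>"
      unfolding \<phi>_def by (intro continuous_intros) (auto simp: add_nonneg_pos add_nonneg_eq_0_iff)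
  next
    fix t :: real assume t: "0 < t" "t < 1"
    have "norm (H (t *\<^sub>R q) q) \<le> norm (H (t *\<^sub>R q)) * norm q"
      by (rule norm_blinfun)
    also have "\<dots> \<le> A * (t * norm q + 1) powr (m - 2) * norm q"
      using bound[of "t *\<^sub>R q"] t by (intro mult_right_mono) auto
    finally show "norm (H (t *\<^sub>R q) q) \<le> A * (t * norm q + 1) powr (m - 2) * norm q" .
  qed (use G_ray \<phi>_deriv in auto)
  then show ?thesis
    by (simp add: \<phi>_def right_diff_distrib)
qed

lemma norm_le_on_ball_of_bounded_derivative:
  fixes G :: "'a::real_normed_vector \<Rightarrow> 'b::real_normed_vector" and H :: "'a \<Rightarrow> 'a \<Rightarrow>\<^sub>L 'b"
  assumes deriv: "\<And>q. (G has_derivative blinfun_apply (H q)) (at q)"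
    and m: "1 < m" and A: "0 \<le> A"
    and bound: "\<And>q. norm (H q) \<le> A * (norm q + 1) powr (m - 2)"
    and r: "1 \<le> r" and x: "norm x \<le> 2 * r"
  shows "norm (G x) \<le> (norm (G 0) + A / (m - 1) * 3 powr (m - 1)) * r powr (m - 1)"
proof -
  have r_pow: "1 \<le> r powr (m - 1)"
    using r m by (intro ge_one_powr_ge_zero) auto
  have "(norm x + 1) powr (m - 1) \<le> (3 * r) powr (m - 1)"
    using x r m by (intro powr_mono2) auto
  also have "\<dots> = 3 powr (m - 1) * r powr (m - 1)"
    using r by (simp add: powr_mult)
  finally have "(norm x + 1) powr (m - 1) - 1 \<le> 3 powr (m - 1) * r powr (m - 1)"
    by simp
  then have "A / (m - 1) * ((norm x + 1) powr (m - 1) - 1)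
      \<le> A / (m - 1) * (3 powr (m - 1) * r powr (m - 1))"
    using A m by (intro mult_left_mono) auto
  moreover have "norm (G 0) \<le> norm (G 0) * r powr (m - 1)"
    using r_pow by (simp add: mult_le_cancel_left1)
  ultimately show ?thesis
    using norm_growth_of_bounded_derivative[OF deriv m bound, of x]
      norm_triangle_sub[of "G x" "G 0"]
    by (simp add: distrib_right)
qed

lemma leapfrog_Pair:
  "leapfrog G h (q, p) =
    (q + h *\<^sub>R (p - (h / 2) *\<^sub>R G q),
     p - (h / 2) *\<^sub>R G q - (h / 2) *\<^sub>R G (q + h *\<^sub>R (p - (h / 2) *\<^sub>R G q)))"
  by (simp add: leapfrog_def psi1_def psi2_def)

lemma norm_leapfrog_fst_diff:
  assumes h: "0 \<le> h" and G: "norm (G q) \<le> c"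
  shows "norm (fst (leapfrog G h (q, p)) - q) \<le> h * (norm p + h / 2 * c)"
proof -
  have "norm (p - (h / 2) *\<^sub>R G q) \<le> norm p + norm ((h / 2) *\<^sub>R G q)"
    by (rule norm_triangle_ineq4)
  also have "\<dots> \<le> norm p + h / 2 * c"
    using h G by (simp add: mult_left_mono)
  finally show ?thesis
    using h by (simp add: leapfrog_Pair mult_left_mono)
qed

lemma norm_leapfrog_snd:
  assumes h: "0 \<le> h" and G: "norm (G q) \<le> c" "norm (G (fst (leapfrog G h (q, p)))) \<le> c"
  shows "norm (snd (leapfrog G h (q, p))) \<le> norm p + h * c"
proof -
  define q' where "q' = fst (leapfrog G h (q, p))"
  have "snd (leapfrog G h (q, p)) = p - (h / 2) *\<^sub>R G q - (h / 2) *\<^sub>R G q'"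
    by (simp add: leapfrog_Pair q'_def)
  also have "norm \<dots> \<le> norm p + norm ((h / 2) *\<^sub>R G q) + norm ((h / 2) *\<^sub>R G q')"
    by (meson add_right_mono norm_triangle_ineq4 order_trans)
  also have "\<dots> \<le> norm p + h / 2 * c + h / 2 * c"
    using h G by (intro add_mono) (auto simp: q'_def mult_left_mono)
  also have "\<dots> = norm p + h * c"
    by simp
  finally show ?thesis .
qed

lemma leapfrog_iterate_bounds:
  fixes G :: "'a::real_normed_vector \<Rightarrow> 'a"
  assumes force: "\<And>x. norm x \<le> 2 * r \<Longrightarrow> norm (G x) \<le> c"
    and h: "0 \<le> h" and c: "0 \<le> c" and q0: "norm q0 \<le> r"
    and small: "real T * h * (norm p0 + real T * h * c) \<le> r"
    and l: "l \<le> T"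
  shows "norm (snd ((leapfrog G h ^^ l) (q0, p0))) \<le> norm p0 + real l * h * c
    \<and> norm (fst ((leapfrog G h ^^ l) (q0, p0)) - q0) \<le> real l * h * (norm p0 + real T * h * c)"
  using l
proof (induction l)
  case 0
  show ?case by simp
next
  case (Suc l)
  define V where "V = norm p0 + real T * h * c"
  obtain q p where qp: "(leapfrog G h ^^ l) (q0, p0) = (q, p)"
    by fastforce
  from Suc qp have p: "norm p \<le> norm p0 + real l * h * c" and q: "norm (q - q0) \<le> real l * h * V"
    by (auto simp: V_def)
  have hV: "0 \<le> h * V"
    using h c by (simp add: V_def)
  have steps: "real l * h * V \<le> real T * h * V" "real (Suc l) * h * V \<le> real T * h * V"
    using Suc.prems mult_right_mono[OF _ hV] by (auto simp: mult.assoc)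
  have force_near: "norm (G x) \<le> c" if "norm (x - q0) \<le> real T * h * V" for x
  proof (rule force)
    show "norm x \<le> 2 * r"
      using that small q0 norm_triangle_sub[of x q0] by (simp add: V_def)
  qed
  have Gq: "norm (G q) \<le> c"
    using q steps(1) by (intro force_near) linarith
  have "0 \<le> h * c"
    using h c by simp
  then have "norm p + h / 2 * c \<le> norm p0 + real (Suc l) * h * c"
    unfolding of_nat_Suc distrib_right mult_1 using p by linarith
  also have "\<dots> \<le> V"
    unfolding V_def using Suc.prems h c by (simp add: mult_right_mono)
  finally have "norm (fst (leapfrog G h (q, p)) - q) \<le> h * V"
    using norm_leapfrog_fst_diff[where G = G and q = q, OF h Gq, of p] h
    by (meson mult_left_mono order_trans)
  then have q': "norm (fst (leapfrog G h (q, p)) - q0) \<le> real (Suc l) * h * V"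
    using q norm_triangle_ineq[of "fst (leapfrog G h (q, p)) - q" "q - q0"]
    by (simp add: distrib_right)
  have "norm (snd (leapfrog G h (q, p))) \<le> norm p + h * c"
    using q' steps(2)
    by (intro norm_leapfrog_snd[where G = G and q = q, OF h Gq] force_near) linarith
  with p have p': "norm (snd (leapfrog G h (q, p))) \<le> norm p0 + real (Suc l) * h * c"
    by (simp add: distrib_right)
  show ?case
    using qp p' q' by (simp add: V_def)
qed

lemma leapfrog_q_spread:
  fixes G :: "'a::real_normed_vector \<Rightarrow> 'a"
  assumes m: "1 < m" "m \<le> 2" and h: "0 < h" and g: "0 \<le> g"
    and force: "\<And>x. norm x \<le> 2 * norm q0 \<Longrightarrow> norm (G x) \<le> g * norm q0 powr (m - 1)"
    and p0: "norm p0 \<le> norm q0 powr (m - 1)"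
    and Q: "real T * (1 + real T * h * g) \<le> Q"
    and small: "h * Q * norm q0 powr (m - 1) \<le> norm q0 / 2"
    and ijk: "i \<le> T" "j \<le> T" "k \<le> T"
  shows "norm (leapfrog_q G h i q0 p0 - leapfrog_q G h j q0 p0)
    \<le> 4 * Q * h * norm (leapfrog_q G h k q0 p0) powr (m - 1)"
proof -
  define r where "r = norm q0"
  define M where "M = r powr (m - 1)"
  define D where "D = h * Q * M"
  have M0: "0 \<le> M" and Q0: "0 \<le> Q"
    using Q h g order_trans[OF _ Q] by (auto simp: M_def)
  have "real T * h * (norm p0 + real T * h * (g * M)) \<le> real T * h * (M + real T * h * g * M)"
    using p0 h by (intro mult_left_mono) (auto simp: M_def r_def mult.assoc)
  also have "\<dots> = h * (real T * (1 + real T * h * g)) * M"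
    by (simp add: algebra_simps)
  also have "\<dots> \<le> D"
    unfolding D_def using Q h M0 by (intro mult_right_mono mult_left_mono) auto
  finally have traj_small: "real T * h * (norm p0 + real T * h * (g * M)) \<le> D" .
  have D_small: "D \<le> r / 2"
    using small by (simp add: D_def M_def r_def)
  have traj_le: "real T * h * (norm p0 + real T * h * (g * M)) \<le> norm q0"
    using traj_small D_small norm_ge_zero[of q0] unfolding r_def by linarith
  have force_M: "\<And>x. norm x \<le> 2 * norm q0 \<Longrightarrow> norm (G x) \<le> g * M"
    using force by (simp add: M_def r_def)
  have close: "norm (leapfrog_q G h l q0 p0 - q0) \<le> D" if "l \<le> T" for l
  proof -
    have "norm (leapfrog_q G h l q0 p0 - q0) \<le> real l * h * (norm p0 + real T * h * (g * M))"
      using leapfrog_iterate_bounds[of "norm q0" G "g * M" h q0 T p0 l,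
          OF force_M _ _ order_refl traj_le that] h g M0
      by (simp add: leapfrog_q_def)
    also have "\<dots> \<le> real T * h * (norm p0 + real T * h * (g * M))"
      using that h g M0 by (intro mult_right_mono) auto
    finally show ?thesis using traj_small by linarith
  qed
  let ?qi = "leapfrog_q G h i q0 p0" and ?qj = "leapfrog_q G h j q0 p0"
    and ?qk = "leapfrog_q G h k q0 p0"
  have "r / 2 \<le> norm ?qk"
    using close[OF ijk(3)] D_small norm_triangle_sub[of q0 ?qk]
    by (simp add: r_def norm_minus_commute)
  then have "(r / 2) powr (m - 1) \<le> norm ?qk powr (m - 1)"
    using m by (intro powr_mono2) (auto simp: r_def)
  moreover have "M / 2 \<le> (r / 2) powr (m - 1)"
  proof -
    have "2 powr (m - 1) \<le> 2"
      using powr_mono[of "m - 1" 1 2] m by simp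
    then have "M / 2 \<le> M / 2 powr (m - 1)"
      using M0 by (intro divide_left_mono) auto
    then show ?thesis
      by (simp add: M_def r_def powr_divide)
  qed
  ultimately have "M / 2 \<le> norm ?qk powr (m - 1)"
    by linarith
  then have "4 * Q * h * (M / 2) \<le> 4 * Q * h * norm ?qk powr (m - 1)"
    using Q0 h by (intro mult_left_mono) auto
  then have "2 * D \<le> 4 * Q * h * norm ?qk powr (m - 1)"
    by (simp add: D_def)
  moreover have "norm (?qi - ?qj) \<le> 2 * D"
    using close[OF ijk(1)] close[OF ijk(2)] norm_triangle_ineq4[of "?qi - q0" "?qj - q0"] by simp
  ultimately show ?thesis
    by linarith
qed

definition leapfrog_spread_bounded ::
    "('a::real_normed_vector \<Rightarrow> 'a) \<Rightarrow> real \<Rightarrow> real \<Rightarrow> nat \<Rightarrow> real \<Rightarrow> real \<Rightarrow> real \<Rightarrow> bool" where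
  "leapfrog_spread_bounded G m \<gamma> T h0 \<kappa> R \<longleftrightarrow>
    (\<forall>h. 0 < h \<and> h \<le> h0 \<longrightarrow>
      (\<forall>q0 p0. norm p0 \<le> norm q0 powr \<gamma> \<and> norm q0 \<ge> R \<longrightarrow>
        (\<forall>i\<in>{1..T}. \<forall>j\<in>{1..T}. \<forall>k\<in>{1..T}.
           norm (leapfrog_q G h i q0 p0 - leapfrog_q G h j q0 p0)
             \<le> \<kappa> * h * norm (leapfrog_q G h k q0 p0) powr (m - 1))))"

lemma leapfrog_spread_bounded_sublinear:
  fixes G :: "'a::real_normed_vector \<Rightarrow> 'a"
  assumes m: "1 < m" "m < 2" and \<gamma>: "\<gamma> \<le> m - 1" and T: "1 \<le> T" and g: "0 \<le> g"
    and force: "\<And>r x. 1 \<le> r \<Longrightarrow> norm x \<le> 2 * r \<Longrightarrow> norm (G x) \<le> g * r powr (m - 1)"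
    and h0: "0 < h0"
  shows "\<exists>\<kappa>>0. \<exists>R\<ge>0. leapfrog_spread_bounded G m \<gamma> T h0 \<kappa> R"
proof -
  define Q where "Q = real T * (1 + real T * h0 * g)"
  define R where "R = max 1 ((2 * h0 * Q) powr (1 / (2 - m)))"
  have "1 * 1 \<le> real T * (1 + real T * h0 * g)"
    using T h0 g by (intro mult_mono) auto
  then have Q1: "1 \<le> Q"
    by (simp add: Q_def)
  have "leapfrog_spread_bounded G m \<gamma> T h0 (4 * Q) R"
    unfolding leapfrog_spread_bounded_def
  proof (intro allI impI ballI)
    fix h :: real and q0 p0 :: 'a and i j k :: nat
    assume h: "0 < h \<and> h \<le> h0" and qp: "norm p0 \<le> norm q0 powr \<gamma> \<and> R \<le> norm q0"
      and ijk: "i \<in> {1..T}" "j \<in> {1..T}" "k \<in> {1..T}"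
    define r where "r = norm q0"
    have r1: "1 \<le> r"
      using qp by (simp add: R_def r_def)
    have "((2 * h0 * Q) powr (1 / (2 - m))) powr (2 - m) \<le> r powr (2 - m)"
      using qp m by (intro powr_mono2) (auto simp: R_def r_def)
    then have big: "2 * h0 * Q \<le> r powr (2 - m)"
      using m h0 Q1 by (simp add: powr_powr)
    have "h * Q * r powr (m - 1) \<le> h0 * Q * r powr (m - 1)"
      using h Q1 by (intro mult_right_mono) auto
    also have "\<dots> \<le> r powr (2 - m) / 2 * r powr (m - 1)"
      using big by (intro mult_right_mono) auto
    also have "\<dots> = r / 2"
      using r1 by (simp add: powr_add[symmetric])
    finally have small: "h * Q * norm q0 powr (m - 1) \<le> norm q0 / 2"
      by (simp add: r_def)
    have "norm p0 \<le> norm q0 powr (m - 1)"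
      using qp r1 powr_mono[OF \<gamma>, of "norm q0"] by (simp add: r_def)
    moreover have "real T * (1 + real T * h * g) \<le> Q"
      unfolding Q_def using h g by (intro mult_left_mono add_left_mono mult_right_mono) auto
    ultimately show "norm (leapfrog_q G h i q0 p0 - leapfrog_q G h j q0 p0)
        \<le> 4 * Q * h * norm (leapfrog_q G h k q0 p0) powr (m - 1)"
      using leapfrog_q_spread[OF m(1) _ _ g _ _ _ small] force[of "norm q0"] r1 m h ijk
      by (simp add: r_def)
  qed
  moreover have "0 < 4 * Q" "0 \<le> R"
    using Q1 by (auto simp: R_def)
  ultimately show ?thesis
    by blast
qed

lemma leapfrog_spread_bounded_linear:
  fixes G :: "'a::real_normed_vector \<Rightarrow> 'a"
  assumes m: "m = 2" and \<gamma>: "\<gamma> \<le> m - 1" and T: "1 \<le> T" and g: "0 \<le> g"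
    and force: "\<And>r x. 1 \<le> r \<Longrightarrow> norm x \<le> 2 * r \<Longrightarrow> norm (G x) \<le> g * r powr (m - 1)"
  shows "\<exists>h0>0. \<exists>\<kappa>>0. \<exists>R\<ge>0. leapfrog_spread_bounded G m \<gamma> T h0 \<kappa> R"
proof -
  define Q where "Q = real T * (1 + real T * g)"
  have "1 * 1 \<le> real T * (1 + real T * g)"
    using T g by (intro mult_mono) auto
  then have Q1: "1 \<le> Q"
    by (simp add: Q_def)
  have "leapfrog_spread_bounded G m \<gamma> T (1 / (2 * Q)) (4 * Q) 1"
    unfolding leapfrog_spread_bounded_def
  proof (intro allI impI ballI)
    fix h :: real and q0 p0 :: 'a and i j k :: nat
    assume h: "0 < h \<and> h \<le> 1 / (2 * Q)" and qp: "norm p0 \<le> norm q0 powr \<gamma> \<and> 1 \<le> norm q0"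
      and ijk: "i \<in> {1..T}" "j \<in> {1..T}" "k \<in> {1..T}"
    have "h * Q \<le> 1 / 2"
      using h Q1 by (simp add: field_simps)
    then have small: "h * Q * norm q0 powr (m - 1) \<le> norm q0 / 2"
      using qp m mult_right_mono[of "h * Q" "1 / 2" "norm q0"] by simp
    have "h \<le> 1"
      using h Q1 order_trans[of h "1 / (2 * Q)" 1] by simp
    then have "real T * (h * g) \<le> real T * g"
      using h g by (intro mult_left_mono mult_left_le_one_le) auto
    then have "real T * (1 + real T * h * g) \<le> Q"
      unfolding Q_def by (intro mult_left_mono) (auto simp: mult.assoc)
    moreover have "norm p0 \<le> norm q0 powr (m - 1)"
      using qp powr_mono[OF \<gamma>, of "norm q0"] by simp
    ultimately show "norm (leapfrog_q G h i q0 p0 - leapfrog_q G h j q0 p0)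
        \<le> 4 * Q * h * norm (leapfrog_q G h k q0 p0) powr (m - 1)"
      using leapfrog_q_spread[OF _ _ _ g _ _ _ small] force[of "norm q0"] qp m h ijk
      by simp
  qed
  moreover have "0 < 1 / (2 * Q)" "0 < 4 * Q"
    using Q1 by auto
  ultimately show ?thesis
    using zero_le_one by blast
qed

theorem lemma13:
  fixes U :: "'a::euclidean_space \<Rightarrow> real"
    and G :: "'a \<Rightarrow> 'a"
    and H :: "'a \<Rightarrow> 'a \<Rightarrow>\<^sub>L 'a"
    and H3 :: "'a \<Rightarrow> 'a \<Rightarrow>\<^sub>L ('a \<Rightarrow>\<^sub>L 'a)"
    and m A1 \<gamma> :: real and T :: nat
  assumes m: "1 < m" "m \<le> 2"
    and gradU: "\<And>q. (U has_derivative (\<lambda>v. G q \<bullet> v)) (at q)"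
    and D2U: "\<And>q. (G has_derivative blinfun_apply (H q)) (at q)"
    and D3U: "\<And>q. (H has_derivative blinfun_apply (H3 q)) (at q)"
    and C3: "continuous_on UNIV H3"
    and A1: "A1 \<ge> 0"
    and bound2: "\<And>q. norm (H q) \<le> A1 * (norm q + 1) powr (m - 2)"
    and bound3: "\<And>q. norm (H3 q) \<le> A1 * (norm q + 1) powr (m - 3)"
    and T: "T \<ge> 1"
    and \<gamma>: "0 < \<gamma>" "\<gamma> < m - 1"
  shows
    "(m < 2 \<longrightarrow> (\<forall>h0>0. \<exists>\<kappa>>0. \<exists>R\<ge>0. \<forall>h. 0 < h \<and> h \<le> h0 \<longrightarrow>
        (\<forall>q0 p0. norm p0 \<le> norm q0 powr \<gamma> \<and> norm q0 \<ge> R \<longrightarrow>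
          (\<forall>i\<in>{1..T}. \<forall>j\<in>{1..T}. \<forall>k\<in>{1..T}.
             norm (leapfrog_q G h i q0 p0 - leapfrog_q G h j q0 p0)
               \<le> \<kappa> * h * norm (leapfrog_q G h k q0 p0) powr (m - 1)))))
   \<and> (m = 2 \<longrightarrow> (\<exists>h0>0. \<exists>\<kappa>>0. \<exists>R\<ge>0. \<forall>h. 0 < h \<and> h \<le> h0 \<longrightarrow>
        (\<forall>q0 p0. norm p0 \<le> norm q0 powr \<gamma> \<and> norm q0 \<ge> R \<longrightarrow>
          (\<forall>i\<in>{1..T}. \<forall>j\<in>{1..T}. \<forall>k\<in>{1..T}.
             norm (leapfrog_q G h i q0 p0 - leapfrog_q G h j q0 p0)
               \<le> \<kappa> * h * norm (leapfrog_q G h k q0 p0) powr (m - 1)))))"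
proof -
  define g where "g = norm (G 0) + A1 / (m - 1) * 3 powr (m - 1)"
  have g: "0 \<le> g"
    using A1 m by (simp add: g_def)
  have force: "\<And>r x. 1 \<le> r \<Longrightarrow> norm x \<le> 2 * r \<Longrightarrow> norm (G x) \<le> g * r powr (m - 1)"
    unfolding g_def using norm_le_on_ball_of_bounded_derivative[OF D2U m(1) A1 bound2] .
  have \<gamma>': "\<gamma> \<le> m - 1"
    using \<gamma> by simp
  have "m < 2 \<longrightarrow> (\<forall>h0>0. \<exists>\<kappa>>0. \<exists>R\<ge>0. leapfrog_spread_bounded G m \<gamma> T h0 \<kappa> R)"
    by (intro impI allI) (rule leapfrog_spread_bounded_sublinear[OF m(1) _ \<gamma>' T g force])
  moreover have "m = 2 \<longrightarrow> (\<exists>h0>0. \<exists>\<kappa>>0. \<exists>R\<ge>0. leapfrog_spread_bounded G m \<gamma> T h0 \<kappa> R)"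
    by (intro impI) (rule leapfrog_spread_bounded_linear[OF _ \<gamma>' T g force])
  ultimately show ?thesis
    unfolding leapfrog_spread_bounded_def by (rule conjI)
qed

end
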